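(* Let $\rho\in\mathbb N\cup\{\infty\}$ and let $D$ be a Van Kampen diagram over $X_\rho$. 1. If $C$ is a simply connected cluster of $D$, then $\|\partial C\|_1\le 3\,\mathrm{Area}(D)+\|\partial D\|_1$. 2. If moreover $C$ is standardly filled, then $\mathrm{Area}(C)=\mathrm{length}(\partial C)-2$ and $\|C\|_\infty\le\|\partial C\|_1$.
   Context: Setting. $G=\langle S\mid\mathcal R\rangle$ is a finite presentation, $S$ is finite symmetric, and each relator has length 2 or 3. $H_1,\dots,H_n\le G$ are subgroups, and $S_i\subset S$ is a finite symmetric generating set of $H_i$. Truncated relative presentation. For $\rho\in\mathbb N\cup\{\infty\}$, let $\tilde H_i=\langle\tilde S_i\mid$ words of length $\le\rho$ over $S_i$ trivial in $H_i\rangle$, with $\tilde S_i$ a copy of $S_i$. Let $p_i:\tilde H_i\to H_i$ be the natural epimorphism. Put $\hat S=S\sqcup\tilde H_1\sqcup\dots\sqcup\tilde H_n$, where each element of $\tilde H_i$ is a letter. $X_\rho$ is the presentation of $G$ with generators $\hat S$ and relators: - $\mathcal R'$, consisting of $\mathcal R$ together with the words $\tilde s^{-1}p_i(\tilde s)$ for $\tilde s\in\tilde S_i$; - for each $i$, all words of at most 3 letters of $\tilde H_i$ whose product is trivial in $\tilde H_i$. Complexity. $\|s\|=1$ for $s\in S$. For $a\in\tilde H_i$, $\|a\|$ is the word length of $a$ with respect to $\tilde S_i$. For a path or diagram, $\|\cdot\|_1$ and $\|\cdot\|_\infty$ are the sum and the maximum of the complexities of its edge labels. $\mathrm{Area}$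 is the number of 2-cells, and $\mathrm{length}$ is the number of edges. Clusters. A 2-cell has type $\mathcal R'$ or type $\tilde H_i$ according to its relator. Two cells of the same type $\tilde H_i$ sharing an edge are cluster-adjacent. A cluster is the closure of an equivalence class of the transitive closure of this relation. For a cluster $C$, $\partial C$ is the union of the closed edges of $C$ lying in exactly one 2-cell of $C$. Standard filling. Suppose $C$ is simply connected, so that $\partial C$ is an embedded circle labeled cyclically $a_1,\dots,a_m\in\tilde H_i$. $C$ is standardly filled if it consists of $m-2$ triangles, all of whose vertices lie on $\partial C$, with interior edges joining the initial vertex to the vertices after $a_1\cdots a_j$ and labeled by the element $a_1\cdots a_j\in\tilde H_i$ ($j\le m-2$), i.e. a fan triangulation. *)

theory Defs
  imports Main "HOL-Library.Extended_Nat"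
begin

text \<open>Letters of the alphabet hat-S: a generator of S, or an element of the
  truncated group tilde-H_i (for index i), the latter represented by its
  equivalence class of words over S_i.\<close>
datatype 's letter = Gen 's | Sub nat "'s list set"

record 's setting =
  gS   :: "'s set"
  giv  :: "'s \<Rightarrow> 's"
  gR   :: "'s list set"
  nsub :: nat                   \<comment> \<open>number n of subgroups (indices 0..n-1)\<close>
  gSi  :: "nat \<Rightarrow> 's set"
  rho  :: enat

definition valid_setting :: "'s setting \<Rightarrow> bool" where
  "valid_setting P \<longleftrightarrow>
     finite (gS P) \<and> (\<forall>s\<in>gS P. giv P s \<in> gS P \<and> giv P (giv P s) = s) \<and>
     finite (gR P) \<and> (\<forall>r\<in>gR P. set r \<subseteq> gS P \<and> (length r = 2 \<or> length r = 3)) \<and>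
     (\<forall>i<nsub P. gSi P i \<subseteq> gS P \<and> (\<forall>s\<in>gSi P i. giv P s \<in> gSi P i))"

inductive weq :: "'a set \<Rightarrow> ('a \<Rightarrow> 'a) \<Rightarrow> 'a list set \<Rightarrow> 'a list \<Rightarrow> 'a list \<Rightarrow> bool"
  for A iv Rel where
  weq_refl: "set w \<subseteq> A \<Longrightarrow> weq A iv Rel w w"
| weq_del: "set u \<subseteq> A \<Longrightarrow> set v \<subseteq> A \<Longrightarrow> set r \<subseteq> A \<Longrightarrow>
      r \<in> Rel \<union> {[a, iv a] | a. a \<in> A} \<Longrightarrow> weq A iv Rel (u @ r @ v) (u @ v)"
| weq_sym: "weq A iv Rel w v \<Longrightarrow> weq A iv Rel v w"
| weq_trans: "weq A iv Rel u v \<Longrightarrow> weq A iv Rel v w \<Longrightarrow> weq A iv Rel u w"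

definition wcls :: "'a set \<Rightarrow> ('a \<Rightarrow> 'a) \<Rightarrow> 'a list set \<Rightarrow> 'a list \<Rightarrow> 'a list set" where
  "wcls A iv Rel w = {v. weq A iv Rel w v}"

definition gtriv :: "'s setting \<Rightarrow> 's list \<Rightarrow> bool" where
  "gtriv P w \<longleftrightarrow> weq (gS P) (giv P) (gR P) w []"

definition Hrel_trunc :: "'s setting \<Rightarrow> nat \<Rightarrow> 's list set" where
  "Hrel_trunc P i = {w. set w \<subseteq> gSi P i \<and> enat (length w) \<le> rho P \<and> gtriv P w}"

definition hcls :: "'s setting \<Rightarrow> nat \<Rightarrow> 's list \<Rightarrow> 's list set" where
  "hcls P i w = wcls (gSi P i) (giv P) (Hrel_trunc P i) w"

definition Hgrp :: "'s setting \<Rightarrow> nat \<Rightarrow> 's list set set" where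
  "Hgrp P i = {hcls P i w | w. set w \<subseteq> gSi P i}"

definition hprod :: "'s setting \<Rightarrow> nat \<Rightarrow> 's list set list \<Rightarrow> 's list set" where
  "hprod P i cs = hcls P i (concat (map (\<lambda>c. SOME w. w \<in> c) cs))"

definition hatS :: "'s setting \<Rightarrow> 's letter set" where
  "hatS P = Gen ` gS P \<union> {Sub i c | i c. i < nsub P \<and> c \<in> Hgrp P i}"

fun linv :: "'s setting \<Rightarrow> 's letter \<Rightarrow> 's letter" where
  "linv P (Gen s) = Gen (giv P s)"
| "linv P (Sub i c) = Sub i ((\<lambda>w. rev (map (giv P) w)) ` c)"

fun cx :: "'s letter \<Rightarrow> nat" where
  "cx (Gen s) = 1"
| "cx (Sub i c) = (LEAST k. \<exists>w\<in>c. length w = k)"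

fun subel :: "'s letter \<Rightarrow> 's list set" where
  "subel (Sub i c) = c"
| "subel (Gen s) = {}"

definition Rprime :: "'s setting \<Rightarrow> 's letter list set" where
  "Rprime P = (map Gen) ` gR P \<union>
     {[Sub i (hcls P i [giv P s]), Gen s] | i s. i < nsub P \<and> s \<in> gSi P i}"

definition HRel :: "'s setting \<Rightarrow> nat \<Rightarrow> 's letter list set" where
  "HRel P i = {map (Sub i) cs | cs. length cs \<le> 3 \<and> set cs \<subseteq> Hgrp P i \<and>
                                  hprod P i cs = hcls P i []}"

definition XRel :: "'s setting \<Rightarrow> 's letter list set" where
  "XRel P = Rprime P \<union> (\<Union>i<nsub P. HRel P i)"

text \<open>Darts (oriented edges), rv = reversal, nx = successor of a dart along the
  boundary of the face to which it belongs, lab = label, outf = the outer face.\<close>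
record ('d, 's) diagram =
  dts  :: "'d set"
  rvd  :: "'d \<Rightarrow> 'd"
  nxd  :: "'d \<Rightarrow> 'd"
  labd :: "'d \<Rightarrow> 's letter"
  outf :: "'d set"

definition orb :: "('a \<Rightarrow> 'a) \<Rightarrow> 'a \<Rightarrow> 'a set" where
  "orb f x = {(f ^^ k) x | k. True}"

definition faces :: "('d,'s) diagram \<Rightarrow> 'd set set" where
  "faces D = {orb (nxd D) d | d. d \<in> dts D}"

definition cells :: "('d,'s) diagram \<Rightarrow> 'd set set" where
  "cells D = faces D - {outf D}"

text \<open>vertex at which a dart starts (orbit of the vertex rotation nx o rv)\<close>
definition tailv :: "('d,'s) diagram \<Rightarrow> 'd \<Rightarrow> 'd set" where
  "tailv D d = orb (\<lambda>x. nxd D (rvd D x)) d"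

definition headv :: "('d,'s) diagram \<Rightarrow> 'd \<Rightarrow> 'd set" where
  "headv D d = tailv D (rvd D d)"

definition vertices :: "('d,'s) diagram \<Rightarrow> 'd set set" where
  "vertices D = {tailv D d | d. d \<in> dts D}"

definition edges :: "('d,'s) diagram \<Rightarrow> 'd set set" where
  "edges D = {{d, rvd D d} | d. d \<in> dts D}"

definition fpath :: "('d,'s) diagram \<Rightarrow> 'd \<Rightarrow> 'd list" where
  "fpath D d = map (\<lambda>k. (nxd D ^^ k) d) [0..<card (orb (nxd D) d)]"

definition fword :: "('d,'s) diagram \<Rightarrow> 'd \<Rightarrow> 's letter list" where
  "fword D d = map (labd D) (fpath D d)"

definition winv :: "'s setting \<Rightarrow> 's letter list \<Rightarrow> 's letter list" where
  "winv P w = rev (map (linv P) w)"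

definition reads :: "'s setting \<Rightarrow> ('d,'s) diagram \<Rightarrow> 's letter list set \<Rightarrow> 'd set \<Rightarrow> bool" where
  "reads P D Rel f \<longleftrightarrow> (\<exists>d\<in>f. fword D d \<in> Rel \<or> winv P (fword D d) \<in> Rel)"

text \<open>Van Kampen diagram over X_rho: a connected combinatorial map on the
  2-sphere (Euler characteristic 2) with a distinguished outer face, whose
  other faces (the 2-cells) read relators of X_rho.  The diagram without
  edges (a single vertex) is represented by the empty dart set.\<close>
definition vk_diagram :: "'s setting \<Rightarrow> ('d,'s) diagram \<Rightarrow> bool" where
  "vk_diagram P D \<longleftrightarrow>
     finite (dts D) \<and>
     (\<forall>d\<in>dts D. rvd D d \<in> dts D \<and> rvd D d \<noteq> d \<and> rvd D (rvd D d) = d) \<and>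
     bij_betw (nxd D) (dts D) (dts D) \<and>
     (\<forall>d\<in>dts D. \<forall>d'\<in>dts D.
        (d, d') \<in> {(x, y). x \<in> dts D \<and> (y = nxd D x \<or> y = rvd D x)}\<^sup>*) \<and>
     (if dts D = {} then outf D = {}
      else outf D \<in> faces D \<and>
           int (card (vertices D)) - int (card (edges D)) + int (card (faces D)) = 2) \<and>
     (\<forall>d\<in>dts D. labd D d \<in> hatS P \<and> labd D (rvd D d) = linv P (labd D d)) \<and>
     (\<forall>f\<in>cells D. reads P D (XRel P) f)"

definition area :: "('d,'s) diagram \<Rightarrow> nat" where
  "area D = card (cells D)"

definition bdD_norm1 :: "('d,'s) diagram \<Rightarrow> nat" where
  "bdD_norm1 D = (\<Sum>d\<in>outf D. cx (labd D d))"

definition htype :: "'s setting \<Rightarrow> ('d,'s) diagram \<Rightarrow> nat \<Rightarrow> 'd set \<Rightarrow> bool" where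
  "htype P D i f \<longleftrightarrow> f \<in> cells D \<and> reads P D (HRel P i) f"

definition cadj :: "'s setting \<Rightarrow> ('d,'s) diagram \<Rightarrow> nat \<Rightarrow> ('d set \<times> 'd set) set" where
  "cadj P D i = {(f, g). htype P D i f \<and> htype P D i g \<and> (\<exists>d\<in>f. rvd D d \<in> g)}"

definition is_cluster :: "'s setting \<Rightarrow> ('d,'s) diagram \<Rightarrow> nat \<Rightarrow> 'd set set \<Rightarrow> bool" where
  "is_cluster P D i C \<longleftrightarrow> i < nsub P \<and>
     (\<exists>f. htype P D i f \<and> C = {g. (f, g) \<in> (cadj P D i)\<^sup>*})"

definition cdarts :: "('d,'s) diagram \<Rightarrow> 'd set set \<Rightarrow> 'd set" where
  "cdarts D C = \<Union>C \<union> rvd D ` \<Union>C"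

text \<open>boundary of C: the edges lying in exactly one 2-cell of C, each represented
  by its dart lying in a cell of C\<close>
definition bdry :: "('d,'s) diagram \<Rightarrow> 'd set set \<Rightarrow> 'd set" where
  "bdry D C = {d \<in> \<Union>C. rvd D d \<notin> \<Union>C}"

definition bdry_norm1 :: "('d,'s) diagram \<Rightarrow> 'd set set \<Rightarrow> nat" where
  "bdry_norm1 D C = (\<Sum>d\<in>bdry D C. cx (labd D d))"

definition cl_normInf :: "('d,'s) diagram \<Rightarrow> 'd set set \<Rightarrow> nat" where
  "cl_normInf D C = Max {cx (labd D d) | d. d \<in> cdarts D C}"

text \<open>edge paths in the closure of C and their combinatorial homotopy
  (edge-path group of the 2-complex given by the closure of C)\<close>
definition cpath :: "('d,'s) diagram \<Rightarrow> 'd set set \<Rightarrow> 'd list \<Rightarrow> bool" where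
  "cpath D C p \<longleftrightarrow> set p \<subseteq> cdarts D C \<and>
     (\<forall>k. Suc k < length p \<longrightarrow> headv D (p ! k) = tailv D (p ! Suc k))"

inductive chtp :: "('d,'s) diagram \<Rightarrow> 'd set set \<Rightarrow> 'd list \<Rightarrow> 'd list \<Rightarrow> bool"
  for D C where
  chtp_refl: "cpath D C p \<Longrightarrow> chtp D C p p"
| chtp_back: "cpath D C (u @ [d, rvd D d] @ v) \<Longrightarrow> chtp D C (u @ [d, rvd D d] @ v) (u @ v)"
| chtp_face: "e \<in> \<Union>C \<Longrightarrow> cpath D C (u @ fpath D e @ v) \<Longrightarrow>
      chtp D C (u @ fpath D e @ v) (u @ v)"
| chtp_sym: "chtp D C p q \<Longrightarrow> chtp D C q p"
| chtp_trans: "chtp D C p q \<Longrightarrow> chtp D C q r \<Longrightarrow> chtp D C p r"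

definition sc_cluster :: "('d,'s) diagram \<Rightarrow> 'd set set \<Rightarrow> bool" where
  "sc_cluster D C \<longleftrightarrow>
     (\<forall>p. cpath D C p \<and> p \<noteq> [] \<and> headv D (last p) = tailv D (hd p) \<longrightarrow> chtp D C p [])"

text \<open>standard (fan) filling: boundary darts b_0,...,b_{m-1} form an embedded
  circle labelled a_1,...,a_m (a_k = label of b_(k-1)); C has m-2 triangles with
  all vertices on the boundary; the interior edges are e_j (2 <= j <= m-2) from the
  initial vertex to the vertex after a_1...a_j, labelled a_1...a_j.\<close>
definition std_filled :: "'s setting \<Rightarrow> ('d,'s) diagram \<Rightarrow> nat \<Rightarrow> 'd set set \<Rightarrow> bool" where
  "std_filled P D i C \<longleftrightarrow>
    (\<exists>b m e. m = card (bdry D C) \<and> 3 \<le> m \<and>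
       bij_betw b {..<m} (bdry D C) \<and>
       (\<forall>k<m. headv D (b k) = tailv D (b (Suc k mod m))) \<and>
       inj_on (\<lambda>k. tailv D (b k)) {..<m} \<and>
       card C = m - 2 \<and>
       (\<forall>f\<in>C. card f = 3 \<and> (\<forall>d\<in>f. \<exists>k<m. tailv D d = tailv D (b k))) \<and>
       (\<forall>j\<in>{2..m-2}. e j \<in> \<Union>C \<and> rvd D (e j) \<in> \<Union>C \<and>
            tailv D (e j) = tailv D (b 0) \<and> headv D (e j) = tailv D (b j) \<and>
            labd D (e j) = Sub i (hprod P i (map (\<lambda>k. subel (labd D (b k))) [0..<j]))) \<and>
       (\<forall>d\<in>\<Union>C. rvd D d \<in> \<Union>C \<longrightarrow> (\<exists>j\<in>{2..m-2}. d = e j \<or> d = rvd D (e j))))"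

end

theory Submission
  imports Defs
begin

text \<open>An edge of the boundary of the cluster either lies on
  the boundary of the diagram, or separates a cell of the cluster from a cell outside it.  That
  cell cannot have type tilde-H_i, since it would then be cluster-adjacent; so it reads a relator
  of R', whose tilde-H_i-letters are copies of generators and have complexity 1.  Charging these
  edges to the at most three edges of the outside cell gives the first bound.  In a standard
  filling every interior edge is labelled by a prefix product a_1 \<cdots> a_j, whose complexity is at
  most the sum of the complexities of a_1, \<dots>, a_j.\<close>

lemma funpow_period_exists:
  assumes f: "bij_betw f S S" and S: "finite S" and x: "x \<in> S"
  obtains p where "0 < p" "(f ^^ p) x = x"
proof -
  have "\<not> inj_on (\<lambda>k. (f ^^ k) x) {..card S}"
  proof
    assume "inj_on (\<lambda>k. (f ^^ k) x) {..card S}"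
    moreover have "(\<lambda>k. (f ^^ k) x) ` {..card S} \<subseteq> S"
      using bij_betw_funpow[OF f] x by (auto simp: bij_betw_def)
    ultimately have "card {..card S} \<le> card S" using card_inj_on_le S by blast
    then show False by simp
  qed
  then obtain a c where ac: "a < c" "(f ^^ a) x = (f ^^ c) x"
    by (metis inj_onI linorder_neqE_nat)
  have "(f ^^ a) ((f ^^ (c - a)) x) = (f ^^ a) x"
    using ac by (metis funpow_add le_add_diff_inverse less_imp_le o_apply)
  moreover have "inj_on (f ^^ a) S" "(f ^^ (c - a)) x \<in> S"
    using bij_betw_funpow[OF f] x by (auto simp: bij_betw_def)
  ultimately have "(f ^^ (c - a)) x = x" using x by (auto dest: inj_onD)
  then show thesis using ac(1) by (intro that[of "c - a"]) auto
qed

lemma orb_subset_if_mem: "y \<in> orb f x \<Longrightarrow> orb f y \<subseteq> orb f x"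
  unfolding orb_def by (auto, metis comp_apply funpow_add)

lemma orb_eq_if_mem:
  assumes "bij_betw f S S" "finite S" "x \<in> S" and y: "y \<in> orb f x"
  shows "orb f y = orb f x"
proof
  obtain p where p: "0 < p" "(f ^^ p) x = x" using funpow_period_exists assms(1-3) .
  obtain j where "y = (f ^^ j) x" using y unfolding orb_def by auto
  then have j: "y = (f ^^ (j mod p)) x" using funpow_mod_eq[OF p(2)] by simp
  have "(f ^^ (p - j mod p)) y = (f ^^ (p - j mod p + j mod p)) x"
    by (simp add: j funpow_add)
  then have "(f ^^ (p - j mod p)) y = x" using p by simp
  then have "x \<in> orb f y" unfolding orb_def by blast
  then show "orb f x \<subseteq> orb f y" by (rule orb_subset_if_mem)
qed (rule orb_subset_if_mem[OF y])

lemma orb_eq_funpow_image: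
  assumes "bij_betw f S S" "finite S" "x \<in> S"
  shows "orb f x = (\<lambda>k. (f ^^ k) x) ` {..<card (orb f x)}"
proof -
  define p where "p = (LEAST p. 0 < p \<and> (f ^^ p) x = x)"
  obtain q where "0 < q" "(f ^^ q) x = x" using funpow_period_exists assms .
  then have "\<exists>p. 0 < p \<and> (f ^^ p) x = x" by blast
  then have p: "0 < p" "(f ^^ p) x = x" unfolding p_def by (metis (mono_tags, lifting) LeastI_ex)+
  have least: "(f ^^ m) x \<noteq> x" if "0 < m" "m < p" for m
    using that not_less_Least[of m "\<lambda>p. 0 < p \<and> (f ^^ p) x = x"] by (auto simp: p_def)
  have "(f ^^ k) x \<in> (\<lambda>k. (f ^^ k) x) ` {..<p}" for k
    using funpow_mod_eq[OF p(2), of k] mod_less_divisor[OF p(1), of k] by (metis imageI lessThan_iff)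
  then have orb: "orb f x = (\<lambda>k. (f ^^ k) x) ` {..<p}" unfolding orb_def by auto
  have "inj_on (\<lambda>k. (f ^^ k) x) {..<p}"
    using inj_on_funpow_least[where f = f and n = p and s = x] p(2) least
    by (simp add: atLeast0LessThan)
  then have "card (orb f x) = p" unfolding orb by (simp add: card_image)
  then show ?thesis using orb by simp
qed

lemma face_subset_darts:
  assumes vk: "vk_diagram P D" and g: "g \<in> faces D"
  shows "g \<subseteq> dts D"
proof -
  have "bij_betw (nxd D) (dts D) (dts D)" using vk unfolding vk_diagram_def by auto
  moreover obtain d where "d \<in> dts D" "g = orb (nxd D) d" using g unfolding faces_def by auto
  ultimately show ?thesis using bij_betw_funpow unfolding orb_def bij_betw_def by fastforce
qed

lemma fword_of_face:
  assumes vk: "vk_diagram P D" and g: "g \<in> faces D" and d: "d \<in> g"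
  shows "length (fword D d) = card g" and "set (fword D d) = labd D ` g"
proof -
  have bij: "bij_betw (nxd D) (dts D) (dts D)" and fin: "finite (dts D)"
    using vk unfolding vk_diagram_def by auto
  obtain d0 where d0: "d0 \<in> dts D" "g = orb (nxd D) d0" using g unfolding faces_def by auto
  have orb: "orb (nxd D) d = g" using orb_eq_if_mem[OF bij fin d0(1)] d d0(2) by simp
  then show "length (fword D d) = card g" unfolding fword_def fpath_def by simp
  have "d \<in> dts D" using face_subset_darts[OF vk g] d by auto
  then have "set (fpath D d) = orb (nxd D) d"
    unfolding fpath_def set_map set_upt atLeast0LessThan
    by (rule orb_eq_funpow_image[symmetric, OF bij fin])
  then show "set (fword D d) = labd D ` g" unfolding fword_def using orb by simp
qed

lemma reads_label:
  assumes vk: "vk_diagram P D" and g: "g \<in> faces D" and "reads P D Rel g" and x: "x \<in> g"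
  obtains w y where "w \<in> Rel" "y \<in> set w" "y = labd D x \<or> y = linv P (labd D x)"
proof -
  obtain d where d: "d \<in> g" "fword D d \<in> Rel \<or> winv P (fword D d) \<in> Rel"
    using assms(3) unfolding reads_def by auto
  have "labd D x \<in> set (fword D d)" using fword_of_face(2)[OF vk g d(1)] x by auto
  then show thesis
    using d(2) that[of "fword D d" "labd D x"] that[of "winv P (fword D d)" "linv P (labd D x)"]
    unfolding winv_def by auto
qed

lemma cx_linv [simp]: "cx (linv P x) = cx x"
  by (cases x) simp_all

lemma length_XRel_le_3: "valid_setting P \<Longrightarrow> w \<in> XRel P \<Longrightarrow> length w \<le> 3"
  unfolding XRel_def Rprime_def HRel_def valid_setting_def by auto

lemma HRel_letter: "w \<in> HRel P j \<Longrightarrow> y \<in> set w \<Longrightarrow> \<exists>c. y = Sub j c"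
  unfolding HRel_def by auto

lemma Rprime_Sub_letter_cx:
  assumes vs: "valid_setting P" and "w \<in> Rprime P" "Sub j c \<in> set w"
  shows "cx (Sub j c) \<le> 1"
proof -
  from assms obtain s where s: "j < nsub P" "s \<in> gSi P j" "c = hcls P j [giv P s]"
    unfolding Rprime_def by auto
  have "giv P s \<in> gSi P j" using vs s unfolding valid_setting_def by auto
  then have "[giv P s] \<in> c" unfolding s(3) hcls_def wcls_def by (auto intro: weq_refl)
  then have "cx (Sub j c) \<le> length [giv P s]" unfolding cx.simps by (blast intro: Least_le)
  then show ?thesis by simp
qed

lemma cell_card_le_3:
  assumes vs: "valid_setting P" and vk: "vk_diagram P D" and g: "g \<in> cells D"
  shows "card g \<le> 3"
proof -
  have gf: "g \<in> faces D" using g unfolding cells_def by auto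
  have "reads P D (XRel P) g" using vk g unfolding vk_diagram_def by auto
  then obtain d where "d \<in> g" "fword D d \<in> XRel P \<or> winv P (fword D d) \<in> XRel P"
    unfolding reads_def by auto
  then show ?thesis
    using fword_of_face(1)[OF vk gf] length_XRel_le_3[OF vs] unfolding winv_def by fastforce
qed

lemma cluster_htype: "is_cluster P D i C \<Longrightarrow> g \<in> C \<Longrightarrow> htype P D i g"
  unfolding is_cluster_def by (auto elim: rtranclE simp: cadj_def)

lemma cluster_closed: "is_cluster P D i C \<Longrightarrow> f \<in> C \<Longrightarrow> (f, g) \<in> cadj P D i \<Longrightarrow> g \<in> C"
  unfolding is_cluster_def by (auto intro: rtrancl_into_rtrancl)

lemma cluster_darts_subset:
  "vk_diagram P D \<Longrightarrow> is_cluster P D i C \<Longrightarrow> \<Union>C \<subseteq> dts D"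
  using cluster_htype face_subset_darts unfolding htype_def cells_def by blast

lemma cluster_dart_label:
  assumes vk: "vk_diagram P D" and cl: "is_cluster P D i C" and x: "x \<in> \<Union>C"
  obtains c where "c \<in> Hgrp P i" "labd D x = Sub i c"
proof -
  obtain f where f: "f \<in> C" "x \<in> f" using x by auto
  then have "f \<in> faces D" "reads P D (HRel P i) f"
    using cluster_htype[OF cl] unfolding htype_def cells_def by auto
  then obtain w y where "w \<in> HRel P i" "y \<in> set w" "y = labd D x \<or> y = linv P (labd D x)"
    using reads_label[OF vk] f(2) by metis
  then obtain c where c: "labd D x = Sub i c"
    using HRel_letter by (cases "labd D x") fastforce+
  have "x \<in> dts D" using cluster_darts_subset[OF vk cl] x by auto
  then have "labd D x \<in> hatS P" using vk unfolding vk_diagram_def by auto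
  then show thesis using that c unfolding hatS_def by auto
qed

lemma bdry_dart_cases:
  assumes vs: "valid_setting P" and vk: "vk_diagram P D" and cl: "is_cluster P D i C"
    and d: "d \<in> bdry D C"
  shows "rvd D d \<in> outf D \<or> (rvd D d \<in> \<Union>(cells D) \<and> cx (labd D d) \<le> 1)"
proof -
  obtain f where f: "f \<in> C" "d \<in> f" and nr: "rvd D d \<notin> \<Union>C" using d unfolding bdry_def by auto
  have dd: "d \<in> dts D" using cluster_darts_subset[OF vk cl] f by auto
  obtain c where c: "labd D d = Sub i c" using cluster_dart_label[OF vk cl] f by blast
  have rd: "rvd D d \<in> dts D" "labd D (rvd D d) = linv P (labd D d)"
    using vk dd unfolding vk_diagram_def by auto
  define g where "g = orb (nxd D) (rvd D d)"
  have gf: "g \<in> faces D" unfolding g_def faces_def using rd by auto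
  have rg: "rvd D d \<in> g" unfolding g_def orb_def by (auto intro: exI[of _ 0])
  show ?thesis
  proof (cases "g = outf D")
    case True
    then show ?thesis using rg by auto
  next
    case False
    then have gc: "g \<in> cells D" using gf unfolding cells_def by auto
    have label_Sub_i: "\<exists>c'. y = Sub i c'"
      if "y = labd D (rvd D d) \<or> y = linv P (labd D (rvd D d))" for y
      using that rd(2) c by auto
    have "reads P D (XRel P) g" using vk gc unfolding vk_diagram_def by auto
    then consider (R) "reads P D (Rprime P) g" | (H) j where "reads P D (HRel P j) g"
      unfolding reads_def XRel_def by blast
    then show ?thesis
    proof cases
      case R
      then obtain w y where w: "w \<in> Rprime P" "y \<in> set w"
          and y: "y = labd D (rvd D d) \<or> y = linv P (labd D (rvd D d))"
        using reads_label[OF vk gf _ rg] by metis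
      obtain c' where "y = Sub i c'" using label_Sub_i[OF y] by blast
      then have "cx y \<le> 1" using Rprime_Sub_letter_cx[OF vs w(1)] w(2) by simp
      then have "cx (labd D d) \<le> 1" using y rd(2) by auto
      then show ?thesis using gc rg by auto
    next
      case H
      then obtain w y where "w \<in> HRel P j" "y \<in> set w"
          and y: "y = labd D (rvd D d) \<or> y = linv P (labd D (rvd D d))"
        using reads_label[OF vk gf _ rg] by metis
      then have "j = i" using HRel_letter label_Sub_i[OF y] by fastforce
      then have "(f, g) \<in> cadj P D i"
        using H gc cluster_htype[OF cl f(1)] f(2) rg unfolding cadj_def htype_def by auto
      then have "g \<in> C" using cluster_closed[OF cl f(1)] by blast
      then show ?thesis using nr rg by auto
    qed
  qed
qed

lemma bdry_norm1_le:
  assumes vs: "valid_setting P" and vk: "vk_diagram P D" and cl: "is_cluster P D i C"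
  shows "bdry_norm1 D C \<le> 3 * area D + bdD_norm1 D"
proof -
  have fin: "finite (dts D)" and rv: "\<And>d. d \<in> dts D \<Longrightarrow>
      rvd D d \<in> dts D \<and> rvd D (rvd D d) = d \<and> labd D (rvd D d) = linv P (labd D d)"
    using vk unfolding vk_diagram_def by auto
  have inj_rv: "inj_on (rvd D) (dts D)" using rv by (metis inj_onI)
  have bdry_sub: "bdry D C \<subseteq> dts D" using cluster_darts_subset[OF vk cl] unfolding bdry_def by auto
  have out_sub: "outf D \<subseteq> dts D"
    using vk face_subset_darts[OF vk] unfolding vk_diagram_def by (cases "dts D = {}") auto
  have cells_sub: "cells D \<subseteq> Pow (dts D)"
    using face_subset_darts[OF vk] unfolding cells_def by auto
  define A where "A = {d \<in> bdry D C. rvd D d \<in> outf D}"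
  define B where "B = bdry D C - A"
  have "bdry_norm1 D C = (\<Sum>d\<in>A. cx (labd D d)) + (\<Sum>d\<in>B. cx (labd D d))"
    unfolding bdry_norm1_def A_def B_def using bdry_sub fin
    by (subst sum.subset_diff[of "{d \<in> bdry D C. rvd D d \<in> outf D}"])
      (auto intro: finite_subset)
  moreover have "(\<Sum>d\<in>A. cx (labd D d)) \<le> bdD_norm1 D"
  proof -
    have A_sub: "A \<subseteq> dts D" using bdry_sub unfolding A_def by auto
    have "(\<Sum>d\<in>A. cx (labd D d)) = (\<Sum>d\<in>A. cx (labd D (rvd D d)))"
      using bdry_sub rv unfolding A_def by (intro sum.cong) auto
    also have "\<dots> = (\<Sum>e\<in>rvd D ` A. cx (labd D e))"
      by (simp add: sum.reindex[OF inj_on_subset[OF inj_rv A_sub]])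
    also have "\<dots> \<le> bdD_norm1 D"
      unfolding bdD_norm1_def using out_sub fin
      by (intro sum_mono2) (auto simp: A_def intro: finite_subset)
    finally show ?thesis .
  qed
  moreover have "(\<Sum>d\<in>B. cx (labd D d)) \<le> 3 * area D"
  proof -
    have B: "cx (labd D d) \<le> 1" "rvd D d \<in> \<Union>(cells D)" if "d \<in> B" for d
      using bdry_dart_cases[OF vs vk cl] that unfolding B_def A_def by blast+
    have "(\<Sum>d\<in>B. cx (labd D d)) \<le> (\<Sum>d\<in>B. 1)" using B(1) by (intro sum_mono) auto
    also have "\<dots> = card B" by simp
    also have "\<dots> = card (rvd D ` B)"
      using bdry_sub by (intro card_image[symmetric] inj_on_subset[OF inj_rv]) (auto simp: B_def)
    also have "\<dots> \<le> card (\<Union>(cells D))"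
      using B(2) cells_sub fin by (intro card_mono) (auto intro: finite_subset)
    also have "\<dots> \<le> (\<Sum>g\<in>cells D. card g)" by (rule card_Union_le_sum_card)
    also have "\<dots> \<le> 3 * area D"
      using cell_card_le_3[OF vs vk] sum_mono[of "cells D" card "\<lambda>_. 3"]
      unfolding area_def by simp
    finally show ?thesis .
  qed
  ultimately show ?thesis by linarith
qed

lemma weq_append:
  assumes "weq A iv Rel u u'" "weq A iv Rel v v'"
  shows "weq A iv Rel (u @ v) (u' @ v')"
proof -
  have sets: "set u \<subseteq> A \<and> set u' \<subseteq> A" if "weq A iv Rel u u'" for u u'
    using that by induction auto
  have right: "weq A iv Rel (u @ z) (u' @ z)" if "weq A iv Rel u u'" "set z \<subseteq> A" for u u' z
    using that
  proof induction
    case (weq_del u v r)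
    then show ?case using weq.weq_del[of u A "v @ z" r Rel iv] by simp
  qed (simp_all add: weq_refl weq_sym, blast intro: weq_trans)
  have left: "weq A iv Rel (z @ u) (z @ u')" if "weq A iv Rel u u'" "set z \<subseteq> A" for u u' z
    using that
  proof induction
    case (weq_del u v r)
    then show ?case using weq.weq_del[of "z @ u" A v r Rel iv] by simp
  qed (simp_all add: weq_refl weq_sym, blast intro: weq_trans)
  show ?thesis using assms sets by (meson weq_trans left right)
qed

lemma cx_hprod_le:
  assumes "set cs \<subseteq> Hgrp P i"
  shows "cx (Sub i (hprod P i cs)) \<le> (\<Sum>c\<leftarrow>cs. cx (Sub i c))"
proof -
  have "\<exists>v\<in>hprod P i cs. length v \<le> (\<Sum>c\<leftarrow>cs. cx (Sub i c))"
    using assms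
  proof (induction cs)
    case Nil
    then show ?case unfolding hprod_def hcls_def wcls_def by (auto intro: weq_refl)
  next
    case (Cons c cs)
    then obtain v where v: "v \<in> hprod P i cs" "length v \<le> (\<Sum>c\<leftarrow>cs. cx (Sub i c))" by auto
    obtain w0 where w0: "set w0 \<subseteq> gSi P i" "c = hcls P i w0"
      using Cons.prems unfolding Hgrp_def by auto
    then have "w0 \<in> c" unfolding hcls_def wcls_def by (auto intro: weq_refl)
    then obtain m where m: "m \<in> c" "length m = cx (Sub i c)"
      using LeastI_ex[of "\<lambda>k. \<exists>w\<in>c. length w = k"] by auto
    have "(SOME w. w \<in> c) \<in> c" using \<open>w0 \<in> c\<close> by (rule someI)
    then have "weq (gSi P i) (giv P) (Hrel_trunc P i) (SOME w. w \<in> c) m"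
      using m(1) unfolding w0(2) hcls_def wcls_def by (auto intro: weq_trans weq_sym)
    then have "m @ v \<in> hprod P i (c # cs)"
      using v(1) unfolding hprod_def hcls_def wcls_def by (simp add: weq_append)
    then show ?case using v(2) m(2) by force
  qed
  then show ?thesis unfolding cx.simps by (blast intro: Least_le order_trans)
qed

lemma std_filled_card_cluster:
  assumes "std_filled P D i C"
  shows "card C = card (bdry D C) - 2"
proof -
  obtain m where "m = card (bdry D C)" "card C = m - 2" using assms unfolding std_filled_def by blast
  then show ?thesis by simp
qed

lemma std_filled_cl_normInf_le:
  assumes vk: "vk_diagram P D" and cl: "is_cluster P D i C" and std: "std_filled P D i C"
  shows "cl_normInf D C \<le> bdry_norm1 D C"
proof -
  obtain b m e where m: "m = card (bdry D C)" "3 \<le> m" and b: "bij_betw b {..<m} (bdry D C)"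
    and e: "\<forall>j\<in>{2..m-2}. e j \<in> \<Union>C \<and> rvd D (e j) \<in> \<Union>C \<and>
         tailv D (e j) = tailv D (b 0) \<and> headv D (e j) = tailv D (b j) \<and>
         labd D (e j) = Sub i (hprod P i (map (\<lambda>k. subel (labd D (b k))) [0..<j]))"
    and interior: "\<forall>d\<in>\<Union>C. rvd D d \<in> \<Union>C \<longrightarrow>
         (\<exists>j\<in>{2..m-2}. d = e j \<or> d = rvd D (e j))"
    using std unfolding std_filled_def by (elim exE conjE) (rule that)
  define N where "N = bdry_norm1 D C"
  have fin: "finite (dts D)" and rv: "\<And>d. d \<in> dts D \<Longrightarrow>
      rvd D d \<in> dts D \<and> labd D (rvd D d) = linv P (labd D d)"
    using vk unfolding vk_diagram_def by auto
  have cx_rv: "cx (labd D (rvd D d)) = cx (labd D d)" if "d \<in> dts D" for d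
    using rv[OF that] by simp
  have UC: "\<Union>C \<subseteq> dts D" by (rule cluster_darts_subset[OF vk cl])
  have bdry_sub: "bdry D C \<subseteq> \<Union>C" unfolding bdry_def by auto
  have bk: "b k \<in> bdry D C" if "k < m" for k using b that unfolding bij_betw_def by auto
  have N: "N = (\<Sum>k<m. cx (labd D (b k)))"
    unfolding N_def bdry_norm1_def by (rule sum.reindex_bij_betw[OF b, symmetric])
  have "finite (bdry D C)" using UC bdry_sub fin by (meson finite_subset order_trans)
  then have bdry_le: "cx (labd D d) \<le> N" if "d \<in> bdry D C" for d
    unfolding N_def bdry_norm1_def using that by (intro member_le_sum) auto
  have edge_le: "cx (labd D (e j)) \<le> N" if j: "j \<in> {2..m-2}" for j
  proof -
    have jm: "j \<le> m" using j by auto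
    have lab: "subel (labd D (b k)) \<in> Hgrp P i \<and>
        cx (Sub i (subel (labd D (b k)))) = cx (labd D (b k))"
      if k: "k < m" for k
    proof -
      obtain c where "c \<in> Hgrp P i" "labd D (b k) = Sub i c"
        using cluster_dart_label[OF vk cl] bk[OF k] bdry_sub by blast
      then show ?thesis by simp
    qed
    define cs where "cs = map (\<lambda>k. subel (labd D (b k))) [0..<j]"
    have cs: "set cs \<subseteq> Hgrp P i" using lab jm unfolding cs_def by auto
    have "labd D (e j) = Sub i (hprod P i cs)" using e j unfolding cs_def by blast
    then have "cx (labd D (e j)) \<le> (\<Sum>c\<leftarrow>cs. cx (Sub i c))"
      using cx_hprod_le[OF cs] by simp
    also have "\<dots> = (\<Sum>k\<leftarrow>[0..<j]. cx (labd D (b k)))"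
      unfolding cs_def map_map comp_def using lab jm
      by (intro arg_cong[where f = sum_list] map_cong) auto
    also have "\<dots> = (\<Sum>k<j. cx (labd D (b k)))"
      by (simp add: sum_set_upt_conv_sum_list_nat[symmetric] atLeast0LessThan)
    also have "\<dots> \<le> N" unfolding N using jm by (intro sum_mono2) auto
    finally show ?thesis .
  qed
  have cluster_le: "cx (labd D x) \<le> N" if x: "x \<in> \<Union>C" for x
  proof (cases "rvd D x \<in> \<Union>C")
    case False
    then show ?thesis using bdry_le x unfolding bdry_def by auto
  next
    case True
    then obtain j where j: "j \<in> {2..m-2}" "x = e j \<or> x = rvd D (e j)" using interior x by blast
    then have "e j \<in> dts D" using e UC by blast
    then show ?thesis using edge_le[OF j(1)] j(2) cx_rv by metis
  qed
  have cdarts_sub: "cdarts D C \<subseteq> dts D" using UC rv unfolding cdarts_def by auto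
  have "cx (labd D x) \<le> N" if "x \<in> cdarts D C" for x
  proof -
    from that consider "x \<in> \<Union>C" | y where "y \<in> \<Union>C" "x = rvd D y" unfolding cdarts_def by blast
    then show ?thesis
    proof cases
      case 2
      then show ?thesis using cluster_le[OF 2(1)] cx_rv UC by auto
    qed (rule cluster_le)
  qed
  moreover have "finite (cdarts D C)" using finite_subset[OF cdarts_sub fin] .
  moreover have "cdarts D C \<noteq> {}"
  proof -
    have "bdry D C \<noteq> {}" using m by auto
    then show ?thesis using bdry_sub unfolding cdarts_def by blast
  qed
  moreover have "{cx (labd D d) | d. d \<in> cdarts D C} = (\<lambda>d. cx (labd D d)) ` cdarts D C" by blast
  ultimately show ?thesis unfolding cl_normInf_def N_def
    by (metis (no_types, lifting) Max_le_iff finite_imageI image_is_empty imageE)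
qed

theorem lemma2p2:
  fixes P :: "'s setting" and D :: "('d, 's) diagram"
    and i :: nat and C :: "'d set set"
  assumes "valid_setting P"
    and "vk_diagram P D"
    and "is_cluster P D i C"
    and "sc_cluster D C"
  shows "bdry_norm1 D C \<le> 3 * area D + bdD_norm1 D \<and>
         (std_filled P D i C \<longrightarrow>
            card C = card (bdry D C) - 2 \<and> cl_normInf D C \<le> bdry_norm1 D C)"
  using bdry_norm1_le[OF assms(1-3)] std_filled_card_cluster
    std_filled_cl_normInf_le[OF assms(2,3)] by blast

end
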